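(* Let $x_1<x_2$, $b_1,b_2\in\mathbb{R}$ and $m>0$ with $|b_2-b_1|\leq m(x_2-x_1)$. Let $x_0=\frac12(x_1+x_2)+\frac1{2m}(b_2-b_1)\in[x_1,x_2]$ and $b_0=\frac12(b_1+b_2)+\frac12m(x_2-x_1)$. If $B$ is a Brownian bridge (diffusion parameter one) on $[x_1,x_2]$ with $B(x_1)=b_1$, $B(x_2)=b_2$, and $N$ is a standard Gaussian random variable, then $$\mathbb{P}\big(B(x_0)\geq b_0\big)\geq\mathbb{P}\big(N\geq(x_2-x_1)^{1/2}m\big).$$ *)

theory Defs
  imports "HOL-Probability.Probability"
begin

definition bb_mean :: "real \<Rightarrow> real \<Rightarrow> real \<Rightarrow> real \<Rightarrow> real \<Rightarrow> real" where
  "bb_mean x1 x2 b1 b2 t = b1 + (t - x1) / (x2 - x1) * (b2 - b1)"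

definition bb_cov :: "real \<Rightarrow> real \<Rightarrow> real \<Rightarrow> real \<Rightarrow> real" where
  "bb_cov x1 x2 s t = (min s t - x1) * (x2 - max s t) / (x2 - x1)"

definition gaussian_rv :: "'a measure \<Rightarrow> ('a \<Rightarrow> real) \<Rightarrow> real \<Rightarrow> real \<Rightarrow> bool" where
  "gaussian_rv M X mu v \<longleftrightarrow>
     X \<in> borel_measurable M \<and>
     (if v = 0 then (AE \<omega> in M. X \<omega> = mu)
      else v > 0 \<and> distributed M lborel X (normal_density mu (sqrt v)))"

text \<open>Brownian bridge on [x1,x2] from b1 to b2: a process with continuous paths that is
  Gaussian with the bridge mean and covariance, i.e. every finite linear combination
  of its values is Gaussian with the corresponding mean and variance.\<close>

definition brownian_bridge ::
  "'a measure \<Rightarrow> real \<Rightarrow> real \<Rightarrow> real \<Rightarrow> real \<Rightarrow> (real \<Rightarrow> 'a \<Rightarrow> real) \<Rightarrow> bool" where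
  "brownian_bridge M x1 x2 b1 b2 B \<longleftrightarrow>
     prob_space M \<and>
     (\<forall>t\<in>{x1..x2}. B t \<in> borel_measurable M) \<and>
     (AE \<omega> in M. continuous_on {x1..x2} (\<lambda>t. B t \<omega>)) \<and>
     (\<forall>ts cs :: real list. length cs = length ts \<longrightarrow> set ts \<subseteq> {x1..x2} \<longrightarrow>
        gaussian_rv M (\<lambda>\<omega>. \<Sum>i<length ts. cs ! i * B (ts ! i) \<omega>)
          (\<Sum>i<length ts. cs ! i * bb_mean x1 x2 b1 b2 (ts ! i))
          (\<Sum>i<length ts. \<Sum>j<length ts. cs ! i * cs ! j * bb_cov x1 x2 (ts ! i) (ts ! j)))"

end

theory Submission
  imports Defs
begin

text \<open>Put \<open>L = x2 - x1\<close>, \<open>d = b2 - b1\<close> and \<open>A = m\<^sup>2 L\<^sup>2 - d\<^sup>2 \<ge> 0\<close>. The value \<open>B(x0)\<close> is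
  Gaussian with variance \<open>A / (4 m\<^sup>2 L)\<close>, and \<open>b0\<close> exceeds its mean by \<open>A / (2 m L)\<close>.
  In standard units the threshold \<open>b0\<close> is therefore \<open>sqrt (A / L) \<le> m sqrt L\<close>, and upper
  tails of the standard normal distribution decrease in the threshold.\<close>

lemma distributed_same_upper_tail:
  fixes X Y :: "'a \<Rightarrow> real"
  assumes "distributed M lborel X f" and "distributed M lborel Y f"
  shows "measure M {\<omega> \<in> space M. X \<omega> \<ge> c} = measure M {\<omega> \<in> space M. Y \<omega> \<ge> c}"
proof -
  have "{\<omega> \<in> space M. Z \<omega> \<ge> c} = Z -` {c..} \<inter> space M" for Z :: "'a \<Rightarrow> real"
    by auto
  then show ?thesis
    using distributed_emeasure[OF assms(1), of "{c..}"] distributed_emeasure[OF assms(2), of "{c..}"]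
    by (simp add: measure_def)
qed

lemma (in prob_space) gaussian_rv_upper_tail_ge_std_normal_tail:
  assumes X: "gaussian_rv M X \<mu> v"
    and N: "distributed M lborel N std_normal_density"
    and threshold: "b - \<mu> \<le> c * sqrt v"
  shows "measure M {\<omega> \<in> space M. N \<omega> \<ge> c} \<le> measure M {\<omega> \<in> space M. X \<omega> \<ge> b}"
proof (cases "v = 0")
  case True
  then have "AE \<omega> in M. X \<omega> = \<mu>" and "X \<in> borel_measurable M" and "b \<le> \<mu>"
    using X threshold by (auto simp: gaussian_rv_def)
  then have "measure M {\<omega> \<in> space M. X \<omega> \<ge> b} = 1"
    by (subst prob_eq_1) (auto elim: AE_mp)
  then show ?thesis by simp
next
  case False
  define \<sigma> where "\<sigma> = sqrt v"
  have "\<sigma> > 0" and "distributed M lborel X (normal_density \<mu> \<sigma>)"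
    using X False by (auto simp: gaussian_rv_def \<sigma>_def)
  then have Z: "distributed M lborel (\<lambda>\<omega>. (X \<omega> - \<mu>) / \<sigma>) std_normal_density"
    using normal_standard_normal_convert by blast
  have "b - \<mu> \<le> c * \<sigma>"
    using threshold by (simp add: \<sigma>_def)
  then have "{\<omega> \<in> space M. (X \<omega> - \<mu>) / \<sigma> \<ge> c} \<subseteq> {\<omega> \<in> space M. X \<omega> \<ge> b}"
    using \<open>\<sigma> > 0\<close> by (auto simp: pos_le_divide_eq)
  moreover have "{\<omega> \<in> space M. X \<omega> \<ge> b} \<in> events"
    using X[unfolded gaussian_rv_def, THEN conjunct1] by measurable
  ultimately have "measure M {\<omega> \<in> space M. (X \<omega> - \<mu>) / \<sigma> \<ge> c} \<le> measure M {\<omega> \<in> space M. X \<omega> \<ge> b}"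
    by (rule finite_measure_mono)
  then show ?thesis
    using distributed_same_upper_tail[OF Z N] by simp
qed

lemma brownian_bridge_gaussian_at:
  assumes "brownian_bridge M x1 x2 b1 b2 B" and "t \<in> {x1..x2}"
  shows "gaussian_rv M (B t) (bb_mean x1 x2 b1 b2 t) (bb_cov x1 x2 t t)"
  using assms(1)[unfolded brownian_bridge_def, THEN conjunct2, THEN conjunct2, THEN conjunct2,
      rule_format, of "[1]" "[t]"] assms(2)
  by simp

lemma le_mult_sqrt_if_square_le:
  fixes a c v :: real
  assumes "a\<^sup>2 \<le> c\<^sup>2 * v" and "c \<ge> 0"
  shows "a \<le> c * sqrt v"
proof -
  have "a \<le> sqrt (a\<^sup>2)" by simp
  also have "\<dots> \<le> sqrt (c\<^sup>2 * v)" using assms(1) by (rule real_sqrt_le_mono)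
  also have "\<dots> = c * sqrt v" using assms(2) by (simp add: real_sqrt_mult)
  finally show ?thesis .
qed

context
  fixes x1 x2 b1 b2 m x0 b0 :: real
  assumes x12: "x1 < x2" and m_pos: "m > 0" and slope: "\<bar>b2 - b1\<bar> \<le> m * (x2 - x1)"
  defines x0_def: "x0 \<equiv> (x1 + x2) / 2 + (b2 - b1) / (2 * m)"
    and b0_def: "b0 \<equiv> (b1 + b2) / 2 + m * (x2 - x1) / 2"
begin

lemma bridge_point_in_interval:
  "x0 \<in> {x1..x2}"
proof -
  have "b2 - b1 \<le> m * (x2 - x1)" and "b1 - b2 \<le> m * (x2 - x1)"
    using slope by linarith+
  then show ?thesis
    using m_pos by (simp add: x0_def field_simps)
qed

lemma bridge_level_minus_mean:
  "b0 - bb_mean x1 x2 b1 b2 x0 = (m\<^sup>2 * (x2 - x1)\<^sup>2 - (b2 - b1)\<^sup>2) / (2 * m * (x2 - x1))"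
  using x12 m_pos unfolding bb_mean_def x0_def b0_def by (simp add: field_simps power2_eq_square)

lemma bridge_variance_at_point:
  "bb_cov x1 x2 x0 x0 = (m\<^sup>2 * (x2 - x1)\<^sup>2 - (b2 - b1)\<^sup>2) / (4 * m\<^sup>2 * (x2 - x1))"
  using x12 m_pos unfolding bb_cov_def x0_def by (simp add: field_simps power2_eq_square)

lemma bridge_level_threshold:
  "b0 - bb_mean x1 x2 b1 b2 x0 \<le> sqrt (x2 - x1) * m * sqrt (bb_cov x1 x2 x0 x0)"
proof (rule le_mult_sqrt_if_square_le)
  define L where "L = x2 - x1"
  define A where "A = m\<^sup>2 * L\<^sup>2 - (b2 - b1)\<^sup>2"
  have "L > 0" using x12 by (simp add: L_def)
  have "\<bar>b2 - b1\<bar> \<le> \<bar>m * L\<bar>"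
    using slope m_pos \<open>L > 0\<close> by (simp add: L_def)
  then have "(b2 - b1)\<^sup>2 \<le> (m * L)\<^sup>2"
    by (simp only: abs_le_square_iff)
  then have "0 \<le> A" and "A \<le> m\<^sup>2 * L\<^sup>2"
    by (simp_all add: A_def power_mult_distrib)
  then have "A * A \<le> m\<^sup>2 * L\<^sup>2 * A"
    by (simp add: mult_right_mono)
  then have "(A / (2 * m * L))\<^sup>2 \<le> (sqrt L * m)\<^sup>2 * (A / (4 * m\<^sup>2 * L))"
    using m_pos \<open>L > 0\<close> by (simp add: power_mult_distrib field_simps power2_eq_square)
  then show "(b0 - bb_mean x1 x2 b1 b2 x0)\<^sup>2 \<le> (sqrt (x2 - x1) * m)\<^sup>2 * bb_cov x1 x2 x0 x0"
    by (simp only: bridge_level_minus_mean bridge_variance_at_point A_def L_def)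
  show "0 \<le> sqrt (x2 - x1) * m"
    using x12 m_pos by simp
qed

end

theorem mainTheorem12:
  fixes M :: "'a measure" and B :: "real \<Rightarrow> 'a \<Rightarrow> real" and N :: "'a \<Rightarrow> real"
    and x1 x2 b1 b2 m :: real
  assumes "x1 < x2" and "m > 0" and "\<bar>b2 - b1\<bar> \<le> m * (x2 - x1)"
    and "brownian_bridge M x1 x2 b1 b2 B"
    and "distributed M lborel N std_normal_density"
  shows "measure M {\<omega> \<in> space M. B ((x1 + x2) / 2 + (b2 - b1) / (2 * m)) \<omega>
                                    \<ge> (b1 + b2) / 2 + m * (x2 - x1) / 2}
         \<ge> measure M {\<omega> \<in> space M. N \<omega> \<ge> sqrt (x2 - x1) * m}"
proof -
  interpret prob_space M
    using assms(4) by (simp add: brownian_bridge_def)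
  show ?thesis
    by (rule gaussian_rv_upper_tail_ge_std_normal_tail
        [OF brownian_bridge_gaussian_at[OF assms(4) bridge_point_in_interval[OF assms(1-3)]]
            assms(5) bridge_level_threshold[OF assms(1-3)]])
qed

end
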